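(* Every bijective (injective) sequence in a group has a proper subsequence.
   Context: Groups are written additively and are not assumed commutative. For a sequence $a_1,a_2,\dotsc$ and a finite nonempty index set $F=\{i_1<\dotsb<i_m\}\subseteq\mathbb N$, let $a_F:=a_{i_1}+\dotsb+a_{i_m}$. For finite index sets $F_1,F_2$, write $F_1<F_2$ if every element of $F_1$ is smaller than every element of $F_2$. A sequence $a_1,a_2,\dotsc$ is proper if $a_{F_1}\ne a_{F_2}$ for all nonempty finite index sets $F_1<F_2$. *)

theory Defs
  imports Main
begin

text \<open>a_F: sum of a over the finite index set F, taken in increasing index order
  (the group is not assumed commutative).\<close>
definition idx_sum :: "(nat \<Rightarrow> 'a::monoid_add) \<Rightarrow> nat set \<Rightarrow> 'a" where
  "idx_sum a F = sum_list (map a (sorted_list_of_set F))"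

definition set_less :: "nat set \<Rightarrow> nat set \<Rightarrow> bool" where
  "set_less F1 F2 = (\<forall>x\<in>F1. \<forall>y\<in>F2. x < y)"

definition proper_seq :: "(nat \<Rightarrow> 'a::group_add) \<Rightarrow> bool" where
  "proper_seq a = (\<forall>F1 F2. finite F1 \<and> finite F2 \<and> F1 \<noteq> {} \<and> F2 \<noteq> {} \<and> set_less F1 F2
      \<longrightarrow> idx_sum a F1 \<noteq> idx_sum a F2)"

end

theory Submission
  imports Defs
begin

text \<open>Choose the subsequence greedily: its next term is taken from beyond the current position
  and avoids every "block difference" \<open>-a_G + a_H\<close> with \<open>G, H\<close> inside the part already
  passed. There are only finitely many such values, and an injective sequence leaves any finite
  set eventually, so the choice is always possible. If now \<open>b_F1 = b_F2\<close> with \<open>F1 < F2\<close>, peeling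
  off the last term \<open>b_n\<close> of \<open>b_F2\<close> exhibits it as such a block difference, a contradiction.\<close>

lemma sorted_list_of_set_image_strict_mono:
  fixes s :: "'a::linorder \<Rightarrow> 'b::linorder"
  assumes "strict_mono s" and "finite F"
  shows "sorted_list_of_set (s ` F) = map s (sorted_list_of_set F)"
proof -
  have "sorted_wrt (<) (map s (sorted_list_of_set F))"
    using assms by (auto simp: sorted_wrt_map strict_mono_def
        intro: sorted_wrt_mono_rel[OF _ strict_sorted_list_of_set])
  then show ?thesis
    using assms(2) by (intro sorted_distinct_set_unique[symmetric]) (simp_all add: strict_sorted_iff)
qed

lemma sorted_list_of_set_insert_greatest:
  fixes n :: "'a::linorder"
  assumes "finite F" and "\<forall>x\<in>F. x < n"
  shows "sorted_list_of_set (insert n F) = sorted_list_of_set F @ [n]"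
proof -
  have "n \<notin> F"
    using assms(2) by blast
  then show ?thesis
    using assms by (simp add: sorted_list_of_set_insert less_imp_le sorted_insort_is_snoc)
qed

lemma idx_sum_comp_strict_mono:
  assumes "strict_mono s" and "finite F"
  shows "idx_sum (a \<circ> s) F = idx_sum a (s ` F)"
  using sorted_list_of_set_image_strict_mono[OF assms] by (simp add: idx_sum_def)

lemma idx_sum_insert_greatest:
  assumes "finite F" and "\<forall>x\<in>F. x < n"
  shows "idx_sum a (insert n F) = idx_sum a F + a n"
  using sorted_list_of_set_insert_greatest[OF assms] by (simp add: idx_sum_def)

definition block_differences :: "(nat \<Rightarrow> 'a::group_add) \<Rightarrow> nat \<Rightarrow> 'a set" where
  "block_differences a m = {- idx_sum a G + idx_sum a H | G H. G \<subseteq> {..m} \<and> H \<subseteq> {..m}}"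

lemma finite_block_differences: "finite (block_differences a m)"
proof -
  have "block_differences a m = (\<lambda>(G, H). - idx_sum a G + idx_sum a H) ` (Pow {..m} \<times> Pow {..m})"
    by (auto simp: block_differences_def)
  then show ?thesis
    by simp
qed

lemma block_differences_comp_strict_mono:
  assumes "strict_mono s"
  shows "block_differences (a \<circ> s) m \<subseteq> block_differences a (s m)"
proof
  fix x
  assume "x \<in> block_differences (a \<circ> s) m"
  then obtain G H where GH: "G \<subseteq> {..m}" "H \<subseteq> {..m}"
    and x: "x = - idx_sum (a \<circ> s) G + idx_sum (a \<circ> s) H"
    by (auto simp: block_differences_def)
  have "finite G" "finite H"
    using GH finite_subset by blast+
  then have "x = - idx_sum a (s ` G) + idx_sum a (s ` H)"
    using x by (simp add: idx_sum_comp_strict_mono[OF assms])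
  moreover have "s ` G \<subseteq> {..s m}" "s ` H \<subseteq> {..s m}"
    using GH assms by (auto simp: strict_mono_less_eq)
  ultimately show "x \<in> block_differences a (s m)"
    by (auto simp: block_differences_def)
qed

lemma proper_seq_if_avoids_block_differences:
  assumes avoid: "\<And>n. b (Suc n) \<notin> block_differences b n"
  shows "proper_seq b"
  unfolding proper_seq_def
proof (intro allI impI notI, elim conjE)
  fix F1 F2
  assume "finite F1" "finite F2" "F1 \<noteq> {}" "F2 \<noteq> {}" "set_less F1 F2"
    and eq: "idx_sum b F1 = idx_sum b F2"
  define n where "n = Max F2"
  define F2' where "F2' = F2 - {n}"
  have "n \<in> F2" and F2': "finite F2'" "\<forall>x\<in>F2'. x < n"
    using \<open>finite F2\<close> \<open>F2 \<noteq> {}\<close> by (auto simp: n_def F2'_def less_le)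
  have F1: "\<forall>x\<in>F1. x < n"
    using \<open>set_less F1 F2\<close> \<open>n \<in> F2\<close> by (auto simp: set_less_def)
  then obtain k where k: "n = Suc k"
    using \<open>F1 \<noteq> {}\<close> by (metis all_not_in_conv less_nat_zero_code not0_implies_Suc)
  have "idx_sum b F1 = idx_sum b F2' + b n"
    using eq idx_sum_insert_greatest[OF F2'] \<open>n \<in> F2\<close> by (simp add: F2'_def insert_absorb)
  then have "b n = - idx_sum b F2' + idx_sum b F1"
    by (simp add: minus_add_cancel)
  moreover have "F1 \<subseteq> {..k}" "F2' \<subseteq> {..k}"
    using F1 F2' k by auto
  ultimately have "b (Suc k) \<in> block_differences b k"
    unfolding k block_differences_def by blast
  with avoid show False
    by blast
qed

lemma inj_avoids_finite_beyond:
  fixes a :: "nat \<Rightarrow> 'a"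
  assumes "inj a" and "finite B"
  shows "\<exists>k>m. a k \<notin> B"
proof (rule ccontr)
  assume "\<not> ?thesis"
  then have "a ` {m<..} \<subseteq> B"
    by auto
  then have "finite (a ` {m<..})"
    using assms(2) finite_subset by blast
  then have "finite {m<..}"
    using assms(1) finite_imageD inj_on_subset by blast
  then show False
    using infinite_Ioi by blast
qed

primrec avoiding_subseq :: "(nat \<Rightarrow> 'a::group_add) \<Rightarrow> nat \<Rightarrow> nat" where
  "avoiding_subseq a 0 = 0"
| "avoiding_subseq a (Suc n) =
     (LEAST k. avoiding_subseq a n < k \<and> a k \<notin> block_differences a (avoiding_subseq a n))"

lemma avoiding_subseq_Suc:
  assumes "inj a"
  shows "avoiding_subseq a n < avoiding_subseq a (Suc n)
    \<and> a (avoiding_subseq a (Suc n)) \<notin> block_differences a (avoiding_subseq a n)"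
  using LeastI_ex[OF inj_avoids_finite_beyond[OF assms finite_block_differences]] by simp

theorem lemma2p2:
  fixes a :: "nat \<Rightarrow> 'a::group_add"
  assumes "inj a"
  shows "\<exists>\<sigma>. strict_mono \<sigma> \<and> proper_seq (a \<circ> \<sigma>)"
proof (intro exI conjI)
  let ?\<sigma> = "avoiding_subseq a"
  show mono: "strict_mono ?\<sigma>"
    unfolding strict_mono_Suc_iff using avoiding_subseq_Suc[OF assms] by blast
  show "proper_seq (a \<circ> ?\<sigma>)"
  proof (rule proper_seq_if_avoids_block_differences)
    fix n
    show "(a \<circ> ?\<sigma>) (Suc n) \<notin> block_differences (a \<circ> ?\<sigma>) n"
      using avoiding_subseq_Suc[OF assms, of n] block_differences_comp_strict_mono[OF mono] by auto
  qed
qed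

end
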